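(* Let $A$ be a finite set, $n\ge3$, $\rho\subseteq A^n$ with $1\overset{\rho}{\sim}2$, and let $(a_1,\dots,a_n)\in A^n\setminus\rho$ and $b_1,\dots,b_n\in A$ with $b_i\neq a_i$ for all $i$, such that $$(\{a_1,b_1\}\times\dots\times\{a_n,b_n\})\setminus\{(a_1,a_2,a_3,\dots,a_n),(b_1,b_2,a_3,\dots,a_n)\}\subseteq\rho.$$ Then $\rho$ is a key relation and $(a_1,\dots,a_n)$ is a key tuple for $\rho$.
   Context: A unary vector-function is a tuple $\Psi=(\psi_1,\dots,\psi_n)$ of maps $\psi_i:A\to A$ acting coordinatewise; it preserves $\rho$ if $\Psi(\rho)\subseteq\rho$. $\rho\subseteq A^n$ is a key relation if there is $\beta\in A^n\setminus\rho$ (a key tuple) such that every $\alpha\in A^n\setminus\rho$ is mapped to $\beta$ by some unary vector-function preserving $\rho$. The relation $\overset{\rho}{\sim}$: for $i\ne j$, $i\overset{\rho}{\sim}j$ iff there do NOT exist $c_1,\dots,c_n,d_i,d_j\in A$ with $(c_1,\dots,c_n)\notin\rho$ while the tuples obtained by replacing $c_i$ by $d_i$, replacing $c_j$ by $d_j$, and replacing both, all lie in $\rho$. *)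

theory Defs
  imports Main
begin

text \<open>Tuples in A^n are lists of length n over A; coordinates are indexed 0..n-1
  (coordinate i+1 of the paper is list index i).\<close>

definition tuples :: "'a set \<Rightarrow> nat \<Rightarrow> 'a list set" where
  "tuples A n = {x. length x = n \<and> set x \<subseteq> A}"

definition vec_funs :: "'a set \<Rightarrow> nat \<Rightarrow> ('a \<Rightarrow> 'a) list set" where
  "vec_funs A n = {\<Psi>. length \<Psi> = n \<and> (\<forall>i<n. \<forall>a\<in>A. (\<Psi> ! i) a \<in> A)}"

definition vapply :: "('a \<Rightarrow> 'a) list \<Rightarrow> 'a list \<Rightarrow> 'a list" where
  "vapply \<Psi> x = map2 (\<lambda>f a. f a) \<Psi> x"

definition preserves :: "('a \<Rightarrow> 'a) list \<Rightarrow> 'a list set \<Rightarrow> bool" where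
  "preserves \<Psi> \<rho> \<longleftrightarrow> (\<forall>x\<in>\<rho>. vapply \<Psi> x \<in> \<rho>)"

definition key_tuple :: "'a set \<Rightarrow> nat \<Rightarrow> 'a list set \<Rightarrow> 'a list \<Rightarrow> bool" where
  "key_tuple A n \<rho> \<beta> \<longleftrightarrow> \<beta> \<in> tuples A n - \<rho> \<and>
     (\<forall>\<alpha>\<in>tuples A n - \<rho>. \<exists>\<Psi>\<in>vec_funs A n. preserves \<Psi> \<rho> \<and> vapply \<Psi> \<alpha> = \<beta>)"

definition key_relation :: "'a set \<Rightarrow> nat \<Rightarrow> 'a list set \<Rightarrow> bool" where
  "key_relation A n \<rho> \<longleftrightarrow> \<rho> \<subseteq> tuples A n \<and> (\<exists>\<beta>. key_tuple A n \<rho> \<beta>)"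

definition rho_sim :: "'a set \<Rightarrow> nat \<Rightarrow> 'a list set \<Rightarrow> nat \<Rightarrow> nat \<Rightarrow> bool" where
  "rho_sim A n \<rho> i j \<longleftrightarrow> i \<noteq> j \<and> i < n \<and> j < n \<and>
     \<not> (\<exists>c\<in>tuples A n. \<exists>di\<in>A. \<exists>dj\<in>A. c \<notin> \<rho> \<and> c[i := di] \<in> \<rho> \<and> c[j := dj] \<in> \<rho>
           \<and> c[i := di, j := dj] \<in> \<rho>)"

end

theory Submission
  imports Defs
begin

text \<open>The condition \<open>i \<sim>\<^sub>\<rho> j\<close> says that for every tuple \<open>\<alpha>\<close> the binary section
  \<open>T u v \<longleftrightarrow> \<alpha>[i := u, j := v] \<in> \<rho>\<close> is difunctional. Given \<open>\<alpha> \<notin> \<rho>\<close>, map coordinate \<open>j\<close> to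
  \<open>b\<^sub>j\<close> on the \<open>T\<close>-neighbours of \<open>\<alpha>\<^sub>i\<close> and to \<open>a\<^sub>j\<close> elsewhere, coordinate \<open>i\<close> to \<open>a\<^sub>i\<close> on the
  block of \<open>\<alpha>\<^sub>i\<close> (\<open>\<alpha>\<^sub>i\<close> and the \<open>u\<close> sharing a \<open>T\<close>-neighbour with it) and to \<open>b\<^sub>i\<close> elsewhere,
  and every other coordinate \<open>k\<close> to \<open>a\<^sub>k\<close> on \<open>\<alpha>\<^sub>k\<close> and to \<open>b\<^sub>k\<close> elsewhere. This sends \<open>\<alpha>\<close> to
  \<open>a\<close> and \<open>\<rho>\<close> into the box \<open>{a\<^sub>1,b\<^sub>1} \<times> \<dots> \<times> {a\<^sub>n,b\<^sub>n}\<close>, and difunctionality keeps the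
  images of \<open>\<rho>\<close> off the two excluded tuples, while every other box tuple lies in \<open>\<rho>\<close>.\<close>

definition binary_section :: "'a list set \<Rightarrow> 'a list \<Rightarrow> nat \<Rightarrow> nat \<Rightarrow> 'a \<Rightarrow> 'a \<Rightarrow> bool" where
  "binary_section \<rho> c i j u v \<longleftrightarrow> c[i := u, j := v] \<in> \<rho>"

lemma tuples_update_pair:
  "c \<in> tuples A n \<Longrightarrow> u \<in> A \<Longrightarrow> v \<in> A \<Longrightarrow> c[i := u, j := v] \<in> tuples A n"
  by (auto simp: tuples_def dest!: set_update_subset_insert[THEN subsetD])

lemma rho_sim_section_difunctional:
  assumes "rho_sim A n \<rho> i j" and "c \<in> tuples A n"
    and "u \<in> A" and "u' \<in> A" and "v \<in> A" and "w \<in> A"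
    and "binary_section \<rho> c i j u v" and "binary_section \<rho> c i j u w"
    and "binary_section \<rho> c i j u' w"
  shows "binary_section \<rho> c i j u' v"
proof (rule ccontr)
  let ?d = "c[i := u', j := v]"
  assume "\<not> binary_section \<rho> c i j u' v"
  then have "?d \<notin> \<rho>" by (simp add: binary_section_def)
  moreover have "i \<noteq> j" using assms(1) by (simp add: rho_sim_def)
  then have "?d[i := u] \<in> \<rho>" and "?d[j := w] \<in> \<rho>" and "?d[i := u, j := w] \<in> \<rho>"
    using assms(7-9) by (simp_all add: binary_section_def list_update_swap[of j i])
  moreover have "?d \<in> tuples A n" using assms(2,4,5) by (rule tuples_update_pair)
  ultimately show False using assms(1,3,6) unfolding rho_sim_def by blast
qed

lemma vapply_map_upt:
  "length x = n \<Longrightarrow> vapply (map \<psi> [0..<n]) x = map (\<lambda>k. \<psi> k (x ! k)) [0..<n]"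
  by (simp add: vapply_def list_eq_iff_nth_eq)

lemma eq_update_pair_if_agree_off:
  assumes "length x = length c" and "\<forall>k<length c. k \<noteq> i \<and> k \<noteq> j \<longrightarrow> x ! k = c ! k"
  shows "x = c[i := x ! i, j := x ! j]"
proof (rule nth_equalityI)
  fix k assume "k < length x"
  then show "x ! k = c[i := x ! i, j := x ! j] ! k"
    using assms by (cases "k = i"; cases "k = j") auto
qed (use assms in simp)

lemma box_vec_fun:
  assumes "a \<in> tuples A n" and "b \<in> tuples A n"
    and "\<And>k u. \<psi> k u = a ! k \<or> \<psi> k u = b ! k"
  shows "map \<psi> [0..<n] \<in> vec_funs A n"
    and "length x = n \<Longrightarrow> vapply (map \<psi> [0..<n]) x \<in>
           {y \<in> tuples A n. \<forall>k<n. y ! k = a ! k \<or> y ! k = b ! k}"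
proof -
  have in_A: "\<psi> k u \<in> A" if "k < n" for k u
  proof -
    have "a ! k \<in> A" "b ! k \<in> A"
      using assms(1,2) that nth_mem[of k a] nth_mem[of k b] by (auto simp: tuples_def)
    then show ?thesis using assms(3)[of k u] by auto
  qed
  then show "map \<psi> [0..<n] \<in> vec_funs A n" by (simp add: vec_funs_def)
  show "length x = n \<Longrightarrow> vapply (map \<psi> [0..<n]) x \<in>
           {y \<in> tuples A n. \<forall>k<n. y ! k = a ! k \<or> y ! k = b ! k}"
    using in_A assms(3) by (auto simp: vapply_map_upt tuples_def)
qed

definition corner_map ::
    "'a set \<Rightarrow> 'a list set \<Rightarrow> 'a list \<Rightarrow> nat \<Rightarrow> nat \<Rightarrow> 'a list \<Rightarrow> 'a list \<Rightarrow> nat \<Rightarrow> 'a \<Rightarrow> 'a" where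
  "corner_map A \<rho> \<alpha> i j a b k u =
     (if k = i then
        if u = \<alpha> ! i \<or> (\<exists>w\<in>A. binary_section \<rho> \<alpha> i j u w \<and> binary_section \<rho> \<alpha> i j (\<alpha> ! i) w)
        then a ! i else b ! i
      else if k = j then
        if binary_section \<rho> \<alpha> i j (\<alpha> ! i) u then b ! j else a ! j
      else if u = \<alpha> ! k then a ! k else b ! k)"

lemma corner_map_in_box: "corner_map A \<rho> \<alpha> i j a b k u = a ! k \<or> corner_map A \<rho> \<alpha> i j a b k u = b ! k"
  by (simp add: corner_map_def)

lemma corner_map_on_section:
  assumes "rho_sim A n \<rho> i j" and "\<alpha> \<in> tuples A n" and "u \<in> A" and "v \<in> A"
    and "a ! i \<noteq> b ! i" and "a ! j \<noteq> b ! j" and "binary_section \<rho> \<alpha> i j u v"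
  shows "(corner_map A \<rho> \<alpha> i j a b i u, corner_map A \<rho> \<alpha> i j a b j v)
           \<notin> {(a ! i, a ! j), (b ! i, b ! j)}"
proof -
  let ?T = "binary_section \<rho> \<alpha> i j"
  have "i \<noteq> j" and "i < n" using assms(1) by (auto simp: rho_sim_def)
  then have "\<alpha> ! i \<in> A" using assms(2) by (auto simp: tuples_def)
  then have "\<not> (\<not> ?T (\<alpha> ! i) v \<and> (u = \<alpha> ! i \<or> (\<exists>w\<in>A. ?T u w \<and> ?T (\<alpha> ! i) w)))"
    using rho_sim_section_difunctional[OF assms(1-3) _ assms(4)] assms(7) by blast
  moreover have "\<not> (?T (\<alpha> ! i) v \<and> \<not> (\<exists>w\<in>A. ?T u w \<and> ?T (\<alpha> ! i) w))"
    using assms(4,7) by blast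
  ultimately show ?thesis using assms(5,6) \<open>i \<noteq> j\<close> by (auto simp: corner_map_def)
qed

lemma corner_map_sends_to_a:
  assumes "i \<noteq> j" and "i < n" and "j < n" and "length \<alpha> = n" and "\<alpha> \<notin> \<rho>" and "length a = n"
  shows "vapply (map (corner_map A \<rho> \<alpha> i j a b) [0..<n]) \<alpha> = a"
proof -
  have "\<not> binary_section \<rho> \<alpha> i j (\<alpha> ! i) (\<alpha> ! j)"
    using assms(5) by (simp add: binary_section_def)
  then show ?thesis
    using assms by (auto simp: vapply_map_upt list_eq_iff_nth_eq corner_map_def)
qed

lemma corner_map_avoids_corners:
  assumes "rho_sim A n \<rho> i j" and "\<rho> \<subseteq> tuples A n" and "\<alpha> \<in> tuples A n"
    and "a \<in> tuples A n" and "\<forall>k<n. b ! k \<noteq> a ! k" and "x \<in> \<rho>"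
  shows "vapply (map (corner_map A \<rho> \<alpha> i j a b) [0..<n]) x \<notin> {a, a[i := b ! i, j := b ! j]}"
    (is "?y \<notin> _")
proof -
  have ij: "i \<noteq> j" "i < n" "j < n" using assms(1) by (auto simp: rho_sim_def)
  have x: "x \<in> tuples A n" using assms(2,6) by blast
  have lengths: "length x = n" "length \<alpha> = n" "length a = n"
    using x assms(3,4) by (auto simp: tuples_def)
  then have y_nth: "?y ! k = corner_map A \<rho> \<alpha> i j a b k (x ! k)" if "k < n" for k
    using that by (simp add: vapply_map_upt)
  show ?thesis
  proof (cases "\<exists>k<n. k \<noteq> i \<and> k \<noteq> j \<and> x ! k \<noteq> \<alpha> ! k")
    case True
    then obtain k where "k < n" "k \<noteq> i" "k \<noteq> j" "?y ! k = b ! k"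
      using y_nth by (auto simp: corner_map_def)
    then show ?thesis using assms(5) by auto
  next
    case False
    then have "x = \<alpha>[i := x ! i, j := x ! j]"
      using lengths by (intro eq_update_pair_if_agree_off) auto
    then have "binary_section \<rho> \<alpha> i j (x ! i) (x ! j)"
      using assms(6) by (simp add: binary_section_def)
    moreover have "x ! i \<in> A" "x ! j \<in> A" using x ij by (auto simp: tuples_def)
    moreover have "a ! i \<noteq> b ! i" "a ! j \<noteq> b ! j" using assms(5) ij by auto
    ultimately have "(?y ! i, ?y ! j) \<notin> {(a ! i, a ! j), (b ! i, b ! j)}"
      using corner_map_on_section[OF assms(1,3)] ij y_nth by simp
    then show ?thesis using lengths ij by auto
  qed
qed

lemma preserving_vec_fun_onto_corner:
  assumes "rho_sim A n \<rho> i j" and "\<rho> \<subseteq> tuples A n"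
    and "a \<in> tuples A n" and "b \<in> tuples A n" and "\<forall>k<n. b ! k \<noteq> a ! k"
    and "{x \<in> tuples A n. \<forall>k<n. x ! k = a ! k \<or> x ! k = b ! k}
           - {a, a[i := b ! i, j := b ! j]} \<subseteq> \<rho>"
    and "\<alpha> \<in> tuples A n - \<rho>"
  shows "\<exists>\<Psi>\<in>vec_funs A n. preserves \<Psi> \<rho> \<and> vapply \<Psi> \<alpha> = a"
proof (intro bexI conjI)
  let ?\<Psi> = "map (corner_map A \<rho> \<alpha> i j a b) [0..<n]"
  show "?\<Psi> \<in> vec_funs A n" using box_vec_fun(1)[OF assms(3,4) corner_map_in_box] .
  show "vapply ?\<Psi> \<alpha> = a"
    using assms(1,3,7) by (intro corner_map_sends_to_a) (auto simp: rho_sim_def tuples_def)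
  show "preserves ?\<Psi> \<rho>" unfolding preserves_def
  proof
    fix x assume "x \<in> \<rho>"
    then have "length x = n" using assms(2) by (auto simp: tuples_def)
    then have "vapply ?\<Psi> x \<in> {y \<in> tuples A n. \<forall>k<n. y ! k = a ! k \<or> y ! k = b ! k}"
      by (rule box_vec_fun(2)[OF assms(3,4) corner_map_in_box])
    moreover have "vapply ?\<Psi> x \<notin> {a, a[i := b ! i, j := b ! j]}"
      using corner_map_avoids_corners[OF assms(1,2) _ assms(3,5) \<open>x \<in> \<rho>\<close>] assms(7) by blast
    ultimately show "vapply ?\<Psi> x \<in> \<rho>" using assms(6) by blast
  qed
qed

theorem mainTheorem8:
  fixes A :: "'a set" and n :: nat and \<rho> :: "'a list set" and a b :: "'a list"
  assumes "finite A" and "n \<ge> 3"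
    and "\<rho> \<subseteq> tuples A n"
    and "rho_sim A n \<rho> 0 1"
    and "a \<in> tuples A n - \<rho>"
    and "b \<in> tuples A n"
    and "\<forall>i<n. b ! i \<noteq> a ! i"
    and "{x \<in> tuples A n. \<forall>i<n. x ! i = a ! i \<or> x ! i = b ! i}
           - {a, a[0 := b ! 0, 1 := b ! 1]} \<subseteq> \<rho>"
  shows "key_relation A n \<rho> \<and> key_tuple A n \<rho> a"
proof -
  have "key_tuple A n \<rho> a"
    unfolding key_tuple_def
    using assms(5) preserving_vec_fun_onto_corner[OF assms(4,3) _ assms(6-8)] by blast
  then show ?thesis using assms(3) by (auto simp: key_relation_def)
qed

end
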